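(* Let $n_b\ge 1$, $d_l\ge 4$, $L\ge 4$, $M\ge 1$ be integers, and let $H$ be a quasi-cyclic SC-LDPC parity-check matrix with parameters $(n_b,d_l,L,M)$ and reuse $T=2$ (as defined in the context). Then, for every choice of the shift values $p_{x,y}$ satisfying the reuse-$2$ condition, the Tanner graph of $H$ contains a cycle of length at most $8$; in particular its girth is at most $8$.
   Context: Quasi-cyclic SC-LDPC matrix: fix integers $n_b\ge1$ (bit nodes per protograph; one check node per protograph), $d_l\ge 2$, $L\ge1$, $M\ge1$. $H$ is a binary block matrix with $L+d_l-1$ block rows (indexed $x=1,\dots,L+d_l-1$) and $n_bL$ block columns (indexed $y=1,\dots,n_bL$), each block of size $M\times M$. For a block column $y$ put $t(y)=\lceil y/n_b\rceil$. Block $(x,y)$ is the all-zero matrix unless $t(y)\le x\le t(y)+d_l-1$, in which case it equals the circulant permutation matrix $I_{(p_{x,y})}$ for a shift value $p_{x,y}\in\{0,\dots,M-1\}$; here $I_{(p)}$ is the $M\times M$ matrix whose row $r$ ($0\le r\le M-1$) has a single $1$, in column $(r+p)\bmod M$, and zeros elsewhere. Reuse-$T$ condition (periodic time-variant construction with period $T$): $p_{x+T,\,y+Tn_b}=p_{x,y}$ whenever both $(x,y)$ and $(x+T,y+Tn_b)$ are nonzero blocks of $H$; otherwise the shift values are arbitrary. The Tanner graph of $H$ is the bipartite graph with one bit node per column and one check node per row of $H$, a bit node and check node being adjacent iff the corresponding entry of $H$ is $1$. The girth is the length of a shortest cycle in the Tanner graph. *)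

theory Defs
  imports Main
begin

definition tblk :: "nat \<Rightarrow> nat \<Rightarrow> nat" where
  "tblk nb y = (y + nb - 1) div nb"

text \<open>Block (x,y) of H is a (nonzero) circulant permutation matrix.\<close>
definition nz_block :: "nat \<Rightarrow> nat \<Rightarrow> nat \<Rightarrow> nat \<Rightarrow> nat \<Rightarrow> bool" where
  "nz_block nb dl L x y \<longleftrightarrow>
     1 \<le> x \<and> x \<le> L + dl - 1 \<and> 1 \<le> y \<and> y \<le> nb * L \<and>
     tblk nb y \<le> x \<and> x \<le> tblk nb y + dl - 1"

definition H_entry :: "nat \<Rightarrow> nat \<Rightarrow> nat \<Rightarrow> nat \<Rightarrow> (nat \<Rightarrow> nat \<Rightarrow> nat)
    \<Rightarrow> nat \<Rightarrow> nat \<Rightarrow> nat \<Rightarrow> nat \<Rightarrow> bool" where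
  "H_entry nb dl L M p x r y c \<longleftrightarrow>
     nz_block nb dl L x y \<and> r < M \<and> c < M \<and> c = (r + p x y) mod M"

text \<open>Tanner graph: check nodes Inl (x,r), bit nodes Inr (y,c).\<close>
fun tanner_adj :: "nat \<Rightarrow> nat \<Rightarrow> nat \<Rightarrow> nat \<Rightarrow> (nat \<Rightarrow> nat \<Rightarrow> nat)
    \<Rightarrow> (nat \<times> nat) + (nat \<times> nat) \<Rightarrow> (nat \<times> nat) + (nat \<times> nat) \<Rightarrow> bool" where
  "tanner_adj nb dl L M p (Inl (x, r)) (Inr (y, c)) = H_entry nb dl L M p x r y c"
| "tanner_adj nb dl L M p (Inr (y, c)) (Inl (x, r)) = H_entry nb dl L M p x r y c"
| "tanner_adj nb dl L M p _ _ = False"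

definition is_cycle :: "('v \<Rightarrow> 'v \<Rightarrow> bool) \<Rightarrow> 'v list \<Rightarrow> bool" where
  "is_cycle adj vs \<longleftrightarrow> 3 \<le> length vs \<and> distinct vs \<and>
     (\<forall>i < length vs. adj (vs ! i) (vs ! ((i + 1) mod length vs)))"

definition reuse :: "nat \<Rightarrow> nat \<Rightarrow> nat \<Rightarrow> nat \<Rightarrow> (nat \<Rightarrow> nat \<Rightarrow> nat) \<Rightarrow> bool" where
  "reuse nb dl L T p \<longleftrightarrow> (\<forall>x y. nz_block nb dl L x y \<and> nz_block nb dl L (x + T) (y + T * nb)
      \<longrightarrow> p (x + T) (y + T * nb) = p x y)"

end

theory Submission
  imports Defs
begin

text \<open>Take the block columns \<open>y\<^sub>k = 1 + k n\<^sub>b\<close> (\<open>k = 0..3\<close>), whose nonzero blocks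
  start in block row \<open>k + 1\<close>, and the block rows 2, 4, 6. The block cycle
  \<open>4 - y\<^sub>0 - 2 - y\<^sub>1 - 4 - y\<^sub>2 - 6 - y\<^sub>3 - 4\<close> uses the blocks \<open>(2,y\<^sub>0), (4,y\<^sub>0), (2,y\<^sub>1), (4,y\<^sub>1)\<close>
  together with their reuse-2 translates \<open>(4,y\<^sub>2), (6,y\<^sub>2), (4,y\<^sub>3), (6,y\<^sub>3)\<close>, so its
  alternating sum of shift values cancels identically. Hence the block cycle lifts to a closed
  walk of length 8 in the Tanner graph. That walk is a cycle unless it meets the same check node
  of block row 4 twice, and then its first half is already a 4-cycle.\<close>

lemma is_cycleI:
  assumes "3 \<le> length vs" and "distinct vs"
    and "successively adj vs" and "adj (last vs) (hd vs)"
  shows "is_cycle adj vs"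
  unfolding is_cycle_def
proof (intro conjI allI impI)
  fix i assume i: "i < length vs"
  show "adj (vs ! i) (vs ! ((i + 1) mod length vs))"
  proof (cases "Suc i < length vs")
    case True
    then show ?thesis using assms(3) by (simp add: successively_nth)
  next
    case False
    with i have "i = length vs - 1" and "vs \<noteq> []" by auto
    then show ?thesis using assms(4) by (simp add: last_conv_nth hd_conv_nth)
  qed
qed (use assms in auto)

lemma tblk_block_start:
  assumes "nb \<ge> 1"
  shows "tblk nb (1 + k * nb) = k + 1"
  using assms unfolding tblk_def by (simp add: add.commute)

lemma nz_block_block_start:
  assumes "nb \<ge> 1" and "k < L" and "k + 1 \<le> x" and "x \<le> k + dl"
  shows "nz_block nb dl L x (1 + k * nb)"
proof -
  have "1 + k * nb \<le> nb * L"
    using assms(1,2) mult_le_mono1[of "Suc k" L nb] by (simp add: mult.commute)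
  then show ?thesis
    using assms tblk_block_start[OF assms(1), of k] by (simp add: nz_block_def)
qed

text \<open>Positions inside a block are written as residues \<open>nat (z mod M)\<close> of integers \<open>z\<close>, so that
  crossing a circulant block with shift \<open>p\<close> from a check to a bit node just adds \<open>p\<close> to \<open>z\<close>.\<close>

lemma tanner_adj_lift:
  assumes "nz_block nb dl L x y" and "M \<ge> 1"
    and "z' mod int M = (z + int (p x y)) mod int M"
  shows "tanner_adj nb dl L M p (Inl (x, nat (z mod int M))) (Inr (y, nat (z' mod int M)))"
    and "tanner_adj nb dl L M p (Inr (y, nat (z' mod int M))) (Inl (x, nat (z mod int M)))"
proof -
  have "int ((nat (z mod int M) + p x y) mod M) = (z + int (p x y)) mod int M"
    using assms(2) by (simp add: zmod_int mod_add_left_eq)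
  then have "nat (z' mod int M) = (nat (z mod int M) + p x y) mod M"
    using assms(3) by linarith
  moreover have "nat (z mod int M) < M" "nat (z' mod int M) < M"
    using assms(2) by (simp_all add: nat_less_iff)
  ultimately show "tanner_adj nb dl L M p (Inl (x, nat (z mod int M))) (Inr (y, nat (z' mod int M)))"
    and "tanner_adj nb dl L M p (Inr (y, nat (z' mod int M))) (Inl (x, nat (z mod int M)))"
    using assms(1) by (simp_all add: H_entry_def)
qed

lemma short_cycle_of_block_cycle:
  assumes "M \<ge> 1"
    and "nz_block nb dl L xa ya" "nz_block nb dl L xb ya" "nz_block nb dl L xb yb"
      "nz_block nb dl L xa yb" "nz_block nb dl L xa yc" "nz_block nb dl L xc yc"
      "nz_block nb dl L xc yd" "nz_block nb dl L xa yd"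
    and "distinct [xa, xb, xc]" and "distinct [ya, yb, yc, yd]"
    and "(int (p xa ya) - int (p xb ya) + int (p xb yb) - int (p xa yb)
          + int (p xa yc) - int (p xc yc) + int (p xc yd) - int (p xa yd)) mod int M = 0"
  shows "\<exists>vs. is_cycle (tanner_adj nb dl L M p) vs \<and> length vs \<le> 8"
proof -
  let ?G = "tanner_adj nb dl L M p"
  define chk :: "nat \<Rightarrow> int \<Rightarrow> (nat \<times> nat) + (nat \<times> nat)"
    where "chk x z = Inl (x, nat (z mod int M))" for x z
  define bit :: "nat \<Rightarrow> int \<Rightarrow> (nat \<times> nat) + (nat \<times> nat)"
    where "bit y z = Inr (y, nat (z mod int M))" for y z
  have edge: "?G (chk x z) (bit y z')" "?G (bit y z') (chk x z)"
    if "nz_block nb dl L x y" "z' mod int M = (z + int (p x y)) mod int M" for x y z z'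
    using tanner_adj_lift[where p = p, OF that(1) assms(1) that(2)] by (simp_all add: chk_def bit_def)
  define z1 where "z1 = int (p xa ya)"
  define z2 where "z2 = z1 - int (p xb ya)"
  define z3 where "z3 = z2 + int (p xb yb)"
  define u where "u = z3 - int (p xa yb)"
  define z5 where "z5 = u + int (p xa yc)"
  define z6 where "z6 = z5 - int (p xc yc)"
  define z7 where "z7 = z6 + int (p xc yd)"
  have e1: "?G (chk xa 0) (bit ya z1)" by (rule edge) (simp_all add: assms(2) z1_def)
  have e2: "?G (bit ya z1) (chk xb z2)" by (rule edge) (simp_all add: assms(3) z2_def)
  have e3: "?G (chk xb z2) (bit yb z3)" by (rule edge) (simp_all add: assms(4) z3_def)
  have e4: "?G (bit yb z3) (chk xa u)" by (rule edge) (simp_all add: assms(5) u_def)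
  have e5: "?G (chk xa u) (bit yc z5)" by (rule edge) (simp_all add: assms(6) z5_def)
  have e6: "?G (bit yc z5) (chk xc z6)" by (rule edge) (simp_all add: assms(7) z6_def)
  have e7: "?G (chk xc z6) (bit yd z7)" by (rule edge) (simp_all add: assms(8) z7_def)
  have "z7 mod int M = int (p xa yd) mod int M"
    using assms(12) by (simp add: mod_eq_dvd_iff dvd_eq_mod_eq_0 z1_def z2_def z3_def u_def
        z5_def z6_def z7_def algebra_simps)
  then have e8: "?G (bit yd z7) (chk xa 0)" by (intro edge) (simp_all add: assms(9))
  have chk_eq: "chk x z = chk x' z' \<longleftrightarrow> x = x' \<and> z mod int M = z' mod int M"
    and bit_eq: "bit y z = bit y' z' \<longleftrightarrow> y = y' \<and> z mod int M = z' mod int M" for x x' y y' z z'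
    using assms(1) by (auto simp: chk_def bit_def eq_nat_nat_iff)
  have chk_neq_bit: "chk x z \<noteq> bit y z'" "bit y z' \<noteq> chk x z" for x y z z'
    by (simp_all add: chk_def bit_def)
  show ?thesis
  proof (cases "u mod int M = 0")
    case True
    then have "z3 mod int M = int (p xa yb) mod int M"
      by (simp add: mod_eq_dvd_iff dvd_eq_mod_eq_0 u_def)
    then have "?G (bit yb z3) (chk xa 0)" by (intro edge) (simp_all add: assms(5))
    then have "is_cycle ?G [chk xa 0, bit ya z1, chk xb z2, bit yb z3]"
      using e1 e2 e3 assms(10,11) by (intro is_cycleI) (auto simp: chk_eq bit_eq chk_neq_bit)
    then show ?thesis by fastforce
  next
    case False
    have "is_cycle ?G [chk xa 0, bit ya z1, chk xb z2, bit yb z3,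
        chk xa u, bit yc z5, chk xc z6, bit yd z7]"
      using e1 e2 e3 e4 e5 e6 e7 e8 assms(10,11) False
      by (intro is_cycleI) (auto simp: chk_eq bit_eq chk_neq_bit)
    then show ?thesis by fastforce
  qed
qed

theorem lemma2:
  fixes nb dl L M :: nat and p :: "nat \<Rightarrow> nat \<Rightarrow> nat"
  assumes "nb \<ge> 1" and "dl \<ge> 4" and "L \<ge> 4" and "M \<ge> 1"
    and "\<forall>x y. nz_block nb dl L x y \<longrightarrow> p x y < M"
    and "reuse nb dl L 2 p"
  shows "\<exists>vs. is_cycle (tanner_adj nb dl L M p) vs \<and> length vs \<le> 8"
proof -
  let ?y = "\<lambda>k. 1 + k * nb"
  have nz: "nz_block nb dl L x (?y k)" if "k < 4" "k + 1 \<le> x" "x \<le> k + 4" for x k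
    using nz_block_block_start[OF assms(1)] that assms(2,3) by simp
  have reused: "p x' (?y k') = p x (?y k)"
    if "x' = x + 2" "k' = k + 2" "k < 2" "k + 1 \<le> x" "x \<le> k + 4" for x x' k k'
  proof -
    have y_shift: "?y k' = ?y k + 2 * nb" using that(2) by (simp add: algebra_simps)
    have "nz_block nb dl L x (?y k)" "nz_block nb dl L (x + 2) (?y k + 2 * nb)"
      using nz[of k x] nz[of k' x'] that unfolding y_shift by simp_all
    then show ?thesis
      using assms(6) that(1) unfolding reuse_def y_shift by blast
  qed
  have "p 4 (?y 2) = p 2 (?y 0)" by (rule reused) simp_all
  moreover have "p 6 (?y 2) = p 4 (?y 0)" by (rule reused) simp_all
  moreover have "p 4 (?y 3) = p 2 (?y 1)" by (rule reused) simp_all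
  moreover have "p 6 (?y 3) = p 4 (?y 1)" by (rule reused) simp_all
  ultimately show ?thesis
    using assms(1,4) nz[of 0 4] nz[of 0 2] nz[of 1 2] nz[of 1 4] nz[of 2 4] nz[of 2 6]
      nz[of 3 6] nz[of 3 4]
    by (intro short_cycle_of_block_cycle[where xa = 4 and xb = 2 and xc = 6
          and ya = "?y 0" and yb = "?y 1" and yc = "?y 2" and yd = "?y 3"]) simp_all
qed

end
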